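(* Let $r>0$ and $0\le\gamma<\lambda\le\mu$. Suppose $q(\theta)=Q(\theta\mid\theta^* )$ is $\lambda$-strongly concave and $\mu$-smooth on $\mathbb{R}^d$, i.e. for all $\theta_1,\theta_2$, $$-\frac{\mu}{2}\|\theta_1-\theta_2\|_2^2\le q(\theta_1)-q(\theta_2)-\langle\nabla q(\theta_2),\theta_1-\theta_2\rangle\le-\frac{\lambda}{2}\|\theta_1-\theta_2\|_2^2,$$ and that the gradient stability condition GS$(\gamma)$ holds over $\mathbb{B}_2(r;\theta^* )$: $$\|\nabla Q(\theta\mid\theta^* )-\nabla Q(\theta\mid\theta)\|_2\le\gamma\|\theta-\theta^*\|_2\quad\text{for all }\theta\in\mathbb{B}_2(r;\theta^* ).$$ Then the population gradient EM operator $G(\theta)=\theta+\alpha\nabla Q(\theta\mid\theta)$ with step size $\alpha=\frac{2}{\mu+\lambda}$ satisfies, for all $\theta\in\mathbb{B}_2(r;\theta^* )$, $$\|G(\theta)-\theta^*\|_2\le\Big(1-\frac{2\lambda-2\gamma}{\mu+\lambda}\Big)\|\theta-\theta^*\|_2.$$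
   Context: Setting (unconstrained): $(Y,Z)$ has joint density $f_{\theta^*}$ from a family $\{f_\theta:\theta\in\mathbb{R}^d\}$; $g_\theta(y)=\int f_\theta(y,z)dz$; $k_\theta(z\mid y)$ is the conditional density of $Z$ given $Y=y$. The population $Q$-function is $Q(\theta'\mid\theta)=\int(\int k_\theta(z\mid y)\log f_{\theta'}(y,z)dz)g_{\theta^*}(y)dy$, differentiable in its first argument; $\nabla$ denotes the gradient in the first argument. $q(\theta)=Q(\theta\mid\theta^* )$, and $\theta^*$ is a maximizer of $q$ over $\mathbb{R}^d$ (so $\nabla q(\theta^* )=0$). $\mathbb{B}_2(r;\theta^* )=\{\theta:\|\theta-\theta^*\|_2\le r\}$. *)

theory Defs
  imports "HOL-Analysis.Analysis"
begin

end

theory Submission imports Defs begin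

(*
  Write q = Q(. | theta_star) and D = theta - theta_star.  The proof splits G(theta) - theta_star as
     (D + alpha (grad q(theta) - grad q(theta_star)))  -  alpha (grad q(theta) - grad Q(theta | theta)),
  using grad q(theta_star) = 0.  The second part is bounded by alpha*gamma*|D| by gradient stability;
  the first part is one step of gradient ascent on the lambda-strongly concave, mu-smooth q and
  contracts by (mu - lambda)/(mu + lambda).
*)

text \<open>If \<open>f\<close> satisfies the quadratic lower (smoothness) bound with gradient \<open>g\<close> and is
  maximised at \<open>x\<close>, then \<open>g x = 0\<close>: a step of length \<open>1/\<mu>\<close> along \<open>g x\<close> would
  otherwise increase \<open>f\<close>.\<close>

lemma gradient_zero_at_max:
  fixes f :: "'a::real_inner \<Rightarrow> real"
  assumes smooth: "\<And>a. - (\<mu> / 2) * (norm (a - x))\<^sup>2 \<le> f a - f x - g x \<bullet> (a - x)"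
    and max: "\<And>a. f a \<le> f x"
    and mu: "\<mu> > 0"
  shows "g x = 0"
proof -
  define t where "t = 1 / \<mu>"
  have "- (\<mu> / 2) * (norm (t *\<^sub>R g x))\<^sup>2 \<le> f (x + t *\<^sub>R g x) - f x - g x \<bullet> (t *\<^sub>R g x)"
    using smooth[of "x + t *\<^sub>R g x"] by simp
  moreover have "f (x + t *\<^sub>R g x) \<le> f x" by (rule max)
  moreover have "g x \<bullet> (t *\<^sub>R g x) = t * (norm (g x))\<^sup>2"
    by (simp add: power2_norm_eq_inner)
  moreover have "(norm (t *\<^sub>R g x))\<^sup>2 = t\<^sup>2 * (norm (g x))\<^sup>2"
    by (simp add: power_mult_distrib del: real_norm_def)
  ultimately have "t * (norm (g x))\<^sup>2 \<le> (\<mu> / 2) * t\<^sup>2 * (norm (g x))\<^sup>2"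
    by (simp only:)
  then have "(norm (g x))\<^sup>2 \<le> (norm (g x))\<^sup>2 / 2"
    using mu unfolding t_def by (simp add: power2_eq_square field_simps)
  then show ?thesis by simp
qed

text \<open>Comparing \<open>phi\<close> at \<open>y - t (dphi y - dphi x)\<close> with both
  linearisations bounds the Bregman divergence from below by the gradient difference.\<close>

lemma bregman_lower_bound:
  fixes phi :: "'a::real_inner \<Rightarrow> real"
  assumes lo: "\<And>a b. 0 \<le> phi a - phi b - dphi b \<bullet> (a - b)"
    and up: "\<And>a b. phi a - phi b - dphi b \<bullet> (a - b) \<le> L/2 * (norm (a - b))\<^sup>2"
  shows "phi y - phi x - dphi x \<bullet> (y - x)
      \<ge> (t - L/2 * t\<^sup>2) * (norm (dphi y - dphi x))\<^sup>2"
proof -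
  define w where "w = dphi y - dphi x"
  define z where "z = y - t *\<^sub>R w"
  have below_x: "0 \<le> phi z - phi x - dphi x \<bullet> (z - x)" by (rule lo)
  have above_y: "phi z - phi y - dphi y \<bullet> (z - y) \<le> L/2 * (norm (z - y))\<^sup>2" by (rule up)
  have "(norm (z - y))\<^sup>2 = t\<^sup>2 * (norm w)\<^sup>2"
    unfolding z_def by (simp add: power_mult_distrib)
  moreover have "dphi x \<bullet> (z - x) = dphi x \<bullet> (y - x) - t * (dphi x \<bullet> w)"
    and "dphi y \<bullet> (z - y) = - t * (dphi y \<bullet> w)"
    unfolding z_def by (simp_all add: inner_diff_right algebra_simps)
  moreover have "t * (norm w)\<^sup>2 = t * (dphi y \<bullet> w) - t * (dphi x \<bullet> w)"
    unfolding w_def by (simp add: power2_norm_eq_inner inner_diff_left inner_diff_right algebra_simps)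
  ultimately show ?thesis
    using below_x above_y unfolding w_def[symmetric] by (simp add: algebra_simps)
qed

text \<open>Summing the
  previous bound in both directions gives \<open>\<langle>w, x - y\<rangle> \<ge> (2t - L t^2) |w|^2\<close> for every \<open>t\<close>;
  take \<open>t = 1/L\<close>, or let \<open>t\<close> grow when \<open>L = 0\<close>.\<close>

lemma cocoercive:
  fixes phi :: "'a::real_inner \<Rightarrow> real"
  assumes lo: "\<And>a b. 0 \<le> phi a - phi b - dphi b \<bullet> (a - b)"
    and up: "\<And>a b. phi a - phi b - dphi b \<bullet> (a - b) \<le> L/2 * (norm (a - b))\<^sup>2"
    and L: "L \<ge> 0"
  shows "(norm (dphi x - dphi y))\<^sup>2 \<le> L * ((dphi x - dphi y) \<bullet> (x - y))"
proof -
  define w where "w = dphi x - dphi y"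
  have nw: "norm (dphi y - dphi x) = norm w" unfolding w_def by (simp add: norm_minus_commute)
  have key: "w \<bullet> (x - y) \<ge> (2 * t - L * t\<^sup>2) * (norm w)\<^sup>2" for t
  proof -
    have "w \<bullet> (x - y) = (phi y - phi x - dphi x \<bullet> (y - x)) + (phi x - phi y - dphi y \<bullet> (x - y))"
      unfolding w_def by (simp add: inner_diff_left inner_diff_right algebra_simps)
    then show ?thesis
      using bregman_lower_bound[OF lo up, where y=y and x=x and t=t]
        bregman_lower_bound[OF lo up, where y=x and x=y and t=t]
      unfolding nw w_def[symmetric] by (simp add: algebra_simps)
  qed
  show ?thesis
  proof (cases "L = 0")
    case True
    define s where "s = \<bar>w \<bullet> (x - y)\<bar> + 1"
    have "(norm w)\<^sup>2 = 0"
    proof (rule ccontr)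
      assume "(norm w)\<^sup>2 \<noteq> 0"
      then have "2 * (s / (norm w)\<^sup>2) * (norm w)\<^sup>2 = 2 * s" by simp
      then have "2 * s \<le> w \<bullet> (x - y)" using key[of "s / (norm w)\<^sup>2"] True by simp
      then show False unfolding s_def by (simp add: abs_if split: if_splits)
    qed
    then show ?thesis using True w_def by simp
  next
    case False
    then have Lp: "L > 0" using L by simp
    have "(2 * (1/L) - L * (1/L)\<^sup>2) = 1/L" using Lp by (simp add: power2_eq_square field_simps)
    then have "w \<bullet> (x - y) \<ge> (norm w)\<^sup>2 / L" using key[of "1/L"] by simp
    then show ?thesis using Lp unfolding w_def by (simp add: field_simps)
  qed
qed

text \<open>It is co-coercivity of the convex \<open>(\<mu> - lam)\<close>-smooth function \<open>-q - lam/2 |.|^2\<close>.\<close>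

lemma strongly_concave_gradient_ineq:
  fixes q :: "'a::real_inner \<Rightarrow> real"
  assumes smooth: "\<And>a b. - (\<mu> / 2) * (norm (a - b))\<^sup>2 \<le> q a - q b - g b \<bullet> (a - b)"
    and concave: "\<And>a b. q a - q b - g b \<bullet> (a - b) \<le> - (lam / 2) * (norm (a - b))\<^sup>2"
    and lam_mu: "lam \<le> \<mu>"
  shows "(norm (g a - g b))\<^sup>2 + lam * \<mu> * (norm (a - b))\<^sup>2
      \<le> - (\<mu> + lam) * ((g a - g b) \<bullet> (a - b))"
proof -
  define phi where "phi x = - q x - lam/2 * (norm x)\<^sup>2" for x
  define dphi where "dphi x = - g x - lam *\<^sub>R x" for x
  have bregman: "phi x - phi y - dphi y \<bullet> (x - y)
      = - (q x - q y - g y \<bullet> (x - y)) - lam/2 * (norm (x - y))\<^sup>2" for x y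
  proof -
    have "(norm (x - y))\<^sup>2 = (norm x)\<^sup>2 - (norm y)\<^sup>2 - 2 * (y \<bullet> (x - y))"
      by (simp add: power2_norm_eq_inner inner_diff_left inner_diff_right inner_commute)
    then show ?thesis unfolding phi_def dphi_def
      by (simp add: inner_diff_left inner_diff_right power2_norm_eq_inner algebra_simps)
  qed
  have "(norm (dphi a - dphi b))\<^sup>2 \<le> (\<mu> - lam) * ((dphi a - dphi b) \<bullet> (a - b))"
  proof (rule cocoercive)
    show "0 \<le> phi x - phi y - dphi y \<bullet> (x - y)" for x y
      using concave[of x y] unfolding bregman by simp
    show "phi x - phi y - dphi y \<bullet> (x - y) \<le> (\<mu> - lam)/2 * (norm (x - y))\<^sup>2" for x y
      using smooth[of x y] unfolding bregman by (simp add: algebra_simps)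
  qed (use lam_mu in simp)
  moreover define u d where "u = g a - g b" and "d = a - b"
  moreover have "norm (dphi a - dphi b) = norm (u + lam *\<^sub>R d)"
    and "(dphi a - dphi b) \<bullet> (a - b) = - (u \<bullet> d) - lam * (norm d)\<^sup>2"
    unfolding dphi_def u_def d_def
    by (simp_all add: norm_minus_commute algebra_simps inner_diff_left power2_norm_eq_inner)
  ultimately have co: "(norm (u + lam *\<^sub>R d))\<^sup>2 \<le> (\<mu> - lam) * (- (u \<bullet> d) - lam * (norm d)\<^sup>2)"
    by simp
  have "(norm (u + lam *\<^sub>R d))\<^sup>2 = (norm u)\<^sup>2 + 2 * lam * (u \<bullet> d) + lam\<^sup>2 * (norm d)\<^sup>2"
    unfolding power2_norm_eq_inner
    by (simp add: inner_add_left inner_add_right inner_commute power2_eq_square algebra_simps)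
  with co show ?thesis
    unfolding u_def[symmetric] d_def[symmetric] by (simp add: power2_eq_square algebra_simps)
qed

text \<open>The inequality above forces one gradient-ascent step with step size \<open>2/(\<mu> + lam)\<close>
  to contract by \<open>(\<mu> - lam)/(\<mu> + lam)\<close>: expanding the square, the cross term is
  controlled by the hypothesis and \<open>1 - \<alpha>^2 lam \<mu> = ((\<mu> - lam)/(\<mu> + lam))^2\<close>.\<close>

lemma gradient_step_contraction:
  fixes u d :: "'a::real_inner"
  assumes ineq: "(norm u)\<^sup>2 + lam * \<mu> * (norm d)\<^sup>2 \<le> - (\<mu> + lam) * (u \<bullet> d)"
    and lam: "0 < lam" "lam \<le> \<mu>"
  shows "norm (d + (2 / (\<mu> + lam)) *\<^sub>R u) \<le> (\<mu> - lam) / (\<mu> + lam) * norm d"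
proof -
  define \<alpha> where "\<alpha> = 2 / (\<mu> + lam)"
  define \<kappa> where "\<kappa> = (\<mu> - lam) / (\<mu> + lam)"
  have sum_pos: "\<mu> + lam > 0" using lam by simp
  have expand: "(norm (d + \<alpha> *\<^sub>R u))\<^sup>2 = (norm d)\<^sup>2 + 2 * \<alpha> * (u \<bullet> d) + \<alpha>\<^sup>2 * (norm u)\<^sup>2"
    unfolding power2_norm_eq_inner
    by (simp add: inner_add_left inner_add_right inner_commute power2_eq_square algebra_simps)
  have "\<alpha>\<^sup>2 * ((norm u)\<^sup>2 + lam * \<mu> * (norm d)\<^sup>2) \<le> \<alpha>\<^sup>2 * (- (\<mu> + lam) * (u \<bullet> d))"
    using ineq by (rule mult_left_mono) simp
  also have "\<dots> = - (\<alpha>\<^sup>2 * (\<mu> + lam)) * (u \<bullet> d)"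
    by (simp only: mult_minus_left mult_minus_right mult.assoc)
  also have "\<alpha>\<^sup>2 * (\<mu> + lam) = 2 * \<alpha>"
  proof -
    have "\<alpha> * (\<mu> + lam) = 2"
      using nonzero_eq_divide_eq[of "\<mu> + lam" \<alpha> 2] \<alpha>_def sum_pos by (metis less_irrefl)
    then have "\<alpha> * (\<alpha> * (\<mu> + lam)) = 2 * \<alpha>" by simp
    then show ?thesis by (simp only: power2_eq_square mult.assoc)
  qed
  finally have cross: "2 * \<alpha> * (u \<bullet> d) \<le> - \<alpha>\<^sup>2 * (norm u)\<^sup>2 - \<alpha>\<^sup>2 * lam * \<mu> * (norm d)\<^sup>2"
    by (simp add: algebra_simps)
  have factor: "1 - \<alpha>\<^sup>2 * lam * \<mu> = \<kappa>\<^sup>2"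
  proof -
    have "1 - \<alpha>\<^sup>2 * lam * \<mu> = ((\<mu> + lam)\<^sup>2 - 4 * lam * \<mu>) / (\<mu> + lam)\<^sup>2"
      unfolding \<alpha>_def power_divide using sum_pos by (simp add: field_simps less_imp_neq)
    also have "(\<mu> + lam)\<^sup>2 - 4 * lam * \<mu> = (\<mu> - lam)\<^sup>2"
      by (simp add: power2_eq_square algebra_simps)
    finally show ?thesis unfolding \<kappa>_def power_divide .
  qed
  have "(norm (d + \<alpha> *\<^sub>R u))\<^sup>2 \<le> (norm d)\<^sup>2 - \<alpha>\<^sup>2 * lam * \<mu> * (norm d)\<^sup>2"
    using expand cross by linarith
  also have "\<dots> = (1 - \<alpha>\<^sup>2 * lam * \<mu>) * (norm d)\<^sup>2"
    by (simp add: left_diff_distrib)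
  finally have "(norm (d + \<alpha> *\<^sub>R u))\<^sup>2 \<le> (1 - \<alpha>\<^sup>2 * lam * \<mu>) * (norm d)\<^sup>2" .
  then have "(norm (d + \<alpha> *\<^sub>R u))\<^sup>2 \<le> (\<kappa> * norm d)\<^sup>2"
    unfolding factor power_mult_distrib .
  moreover have "\<kappa> \<ge> 0" unfolding \<kappa>_def using lam by simp
  ultimately have "norm (d + \<alpha> *\<^sub>R u) \<le> \<kappa> * norm d"
    using power2_le_imp_le by (metis norm_ge_zero mult_nonneg_nonneg)
  then show ?thesis unfolding \<alpha>_def \<kappa>_def .
qed

text \<open>The contraction factor plus the gradient-stability error \<open>\<alpha> \<gamma>\<close> is exactly the claimed rate.\<close>

lemma rate_identity:
  fixes \<mu> lam \<gamma> :: real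
  assumes "\<mu> + lam \<noteq> 0"
  shows "(\<mu> - lam) / (\<mu> + lam) + 2 / (\<mu> + lam) * \<gamma> = 1 - (2 * lam - 2 * \<gamma>) / (\<mu> + lam)"
proof -
  have "(\<mu> - lam) / (\<mu> + lam) + 2 / (\<mu> + lam) * \<gamma> = (\<mu> - lam + 2 * \<gamma>) / (\<mu> + lam)"
    by (simp add: add_divide_distrib)
  also have "\<dots> = ((\<mu> + lam) - (2 * lam - 2 * \<gamma>)) / (\<mu> + lam)" by (simp add: algebra_simps)
  also have "\<dots> = 1 - (2 * lam - 2 * \<gamma>) / (\<mu> + lam)"
    using assms by (metis diff_divide_distrib divide_self_if)
  finally show ?thesis .
qed

text \<open>Only the Bregman bounds of \<open>q = Q(. | theta_star)\<close> with respect to the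
  given gradient field are used.\<close>

theorem theorem3:
  fixes Q :: "real ^ 'd \<Rightarrow> real ^ 'd \<Rightarrow> real"
    and gradQ :: "real ^ 'd \<Rightarrow> real ^ 'd \<Rightarrow> real ^ 'd"
    and theta_star :: "real ^ 'd"
    and r \<gamma> lam \<mu> :: real
  assumes grad: "\<And>\<theta>' \<theta>. GDERIV (\<lambda>t. Q t \<theta>) \<theta>' :> gradQ \<theta>' \<theta>"
    and max: "\<And>\<theta>. Q \<theta> theta_star \<le> Q theta_star theta_star"
    and r_pos: "r > 0"
    and params: "0 \<le> \<gamma>" "\<gamma> < lam" "lam \<le> \<mu>"
    and smooth: "\<And>\<theta>1 \<theta>2. - (\<mu> / 2) * (norm (\<theta>1 - \<theta>2))\<^sup>2
        \<le> Q \<theta>1 theta_star - Q \<theta>2 theta_star - gradQ \<theta>2 theta_star \<bullet> (\<theta>1 - \<theta>2)"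
    and concave: "\<And>\<theta>1 \<theta>2. Q \<theta>1 theta_star - Q \<theta>2 theta_star - gradQ \<theta>2 theta_star \<bullet> (\<theta>1 - \<theta>2)
        \<le> - (lam / 2) * (norm (\<theta>1 - \<theta>2))\<^sup>2"
    and GS: "\<And>\<theta>. \<theta> \<in> cball theta_star r \<Longrightarrow>
        norm (gradQ \<theta> theta_star - gradQ \<theta> \<theta>) \<le> \<gamma> * norm (\<theta> - theta_star)"
  shows "\<forall>\<theta> \<in> cball theta_star r.
     norm ((\<theta> + (2 / (\<mu> + lam)) *\<^sub>R gradQ \<theta> \<theta>) - theta_star)
       \<le> (1 - (2 * lam - 2 * \<gamma>) / (\<mu> + lam)) * norm (\<theta> - theta_star)"
proof
  fix \<theta> assume ball: "\<theta> \<in> cball theta_star r"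
  define g where "g a = gradQ a theta_star" for a
  define d where "d = \<theta> - theta_star"
  define \<alpha> where "\<alpha> = 2 / (\<mu> + lam)"
  have lam_pos: "lam > 0" and \<alpha>_pos: "\<alpha> > 0" using params unfolding \<alpha>_def by auto
  have stationary: "g theta_star = 0"
    using gradient_zero_at_max[where f="\<lambda>a. Q a theta_star" and x=theta_star and g=g] smooth max lam_pos params
    unfolding g_def by fastforce
  have "(norm (g \<theta> - g theta_star))\<^sup>2 + lam * \<mu> * (norm (\<theta> - theta_star))\<^sup>2
      \<le> - (\<mu> + lam) * ((g \<theta> - g theta_star) \<bullet> (\<theta> - theta_star))"
    by (rule strongly_concave_gradient_ineq[where q="\<lambda>a. Q a theta_star"])
      (use smooth concave params in \<open>simp_all add: g_def\<close>)
  then have "(norm (g \<theta>))\<^sup>2 + lam * \<mu> * (norm d)\<^sup>2 \<le> - (\<mu> + lam) * (g \<theta> \<bullet> d)"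
    unfolding stationary d_def by simp
  then have ascent: "norm (d + \<alpha> *\<^sub>R g \<theta>) \<le> (\<mu> - lam) / (\<mu> + lam) * norm d"
    unfolding \<alpha>_def using gradient_step_contraction lam_pos params(3) by blast
  have stability: "norm (g \<theta> - gradQ \<theta> \<theta>) \<le> \<gamma> * norm d"
    using GS[OF ball] unfolding g_def d_def .
  have "\<theta> + \<alpha> *\<^sub>R gradQ \<theta> \<theta> - theta_star = (d + \<alpha> *\<^sub>R g \<theta>) - \<alpha> *\<^sub>R (g \<theta> - gradQ \<theta> \<theta>)"
    unfolding d_def by (simp add: algebra_simps)
  then have "norm (\<theta> + \<alpha> *\<^sub>R gradQ \<theta> \<theta> - theta_star) \<le> norm (d + \<alpha> *\<^sub>R g \<theta>) + \<alpha> * norm (g \<theta> - gradQ \<theta> \<theta>)"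
    using norm_triangle_ineq4[of "d + \<alpha> *\<^sub>R g \<theta>" "\<alpha> *\<^sub>R (g \<theta> - gradQ \<theta> \<theta>)"] \<alpha>_pos by simp
  also have "\<dots> \<le> (\<mu> - lam) / (\<mu> + lam) * norm d + \<alpha> * (\<gamma> * norm d)"
    using ascent mult_left_mono[OF stability, of \<alpha>] \<alpha>_pos by linarith
  also have "\<dots> = ((\<mu> - lam) / (\<mu> + lam) + \<alpha> * \<gamma>) * norm d"
    by (simp add: distrib_right)
  also have "(\<mu> - lam) / (\<mu> + lam) + \<alpha> * \<gamma> = 1 - (2 * lam - 2 * \<gamma>) / (\<mu> + lam)"
    unfolding \<alpha>_def by (rule rate_identity) (use lam_pos params in simp)
  finally show "norm ((\<theta> + (2 / (\<mu> + lam)) *\<^sub>R gradQ \<theta> \<theta>) - theta_star)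
       \<le> (1 - (2 * lam - 2 * \<gamma>) / (\<mu> + lam)) * norm (\<theta> - theta_star)"
    unfolding \<alpha>_def d_def .
qed

end
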